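(* Let $\mathcal{U}\subseteq\mathcal{E}$ be a dead-ending universe and let $\mathcal{A}$ be the set of Left ends of $\mathcal{U}$. Then for every Left dead-end $G$ the following are equivalent: (i) $G\notin\operatorname{up}(\mathcal{A})$; (ii) $G^\circ$ is Left $\mathcal{U}$-strong; (iii) $G^{\circledast}\geq_\mathcal{U} 0$.
   Context: All games are finite partizan games; $\cong$ is identity of game trees; $o(G)$ is the misère outcome class, ordered $\mathscr{L} > \mathscr{N} > \mathscr{R}$, $\mathscr{L} > \mathscr{P} > \mathscr{R}$. A universe is a set of games closed under options, disjunctive sums, conjugates, and forming $\{\mathscr{G}^L\mid\mathscr{G}^R\}$ from nonempty finite subsets of it. For a universe $\mathcal{U}$ and arbitrary games $G,H$, $G\geq_\mathcal{U} H$ means $o(G+X)\geq o(H+X)$ for all $X\in\mathcal{U}$. A Left (Right) end is a game with no Left (Right) option; a Left dead-end is a game all of whose subpositions are Left ends, and similarly for Right; $\mathcal{L}$ denotes the set of Left dead-ends. $\mathcal{E}$ is the set of games in which every subposition that is an end is a (Left or Right) dead-end; a universe contained in $\mathcal{E}$ is dead-ending. For Left dead-ends, $G\geq H$ means $G\geq_\mathcal{V} H$ for every universe $\mathcal{V}$. For a set $\mathcal{A}$ of Left dead-ends, $\operatorname{cl}(\mathcal{A})$ is the smallest set containing $\mathcal{A}$ closed under options and sums, and $\operatorname{up}(\mathcal{A})=\{G\in\mathcal{L}: G\geq H\text{ for some }H\in\operatorname{cl}(\mathcal{A})\}$. $G$ is Left $\mathcal{U}$-strong if $o(G+X)\geq\mathscr{N}$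 for every Left end $X\in\mathcal{U}$. For a Left dead-end $G$: the adjoint is $G^\circ=*=\{0\mid 0\}$ if $G\cong 0$, and $G^\circ=\{(G^R)^\circ\mid 0\}$ otherwise ($G^R$ ranging over Right options of $G$); the Left-modified adjoint is $G^{\circledast}=\{0\mid *\}$ if $G\cong 0$ and $G^{\circledast}=\{(G^R)^\circ\mid *\}$ otherwise. *)

theory Defs
  imports Main "HOL-Library.FSet"
begin

text \<open>A game is given by its finite set of Left options and its finite set of Right
options; equality of this datatype is identity of game trees.\<close>

datatype game = Game (lopts: "game fset") (ropts: "game fset")

definition zero :: game where "zero = Game {||} {||}"
definition star :: game where "star = Game {|zero|} {|zero|}"

lemma size_le_fsum:
  "z |\<in>| A \<Longrightarrow> size z \<le> (\<Sum>x\<in>fset A. Suc (size x))" for z :: game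
  by (rule order_trans[OF _ member_le_sum[of z "fset A" "\<lambda>x. Suc (size x)"]]) auto

function gsum :: "game \<Rightarrow> game \<Rightarrow> game" where
  "gsum (Game L R) (Game L' R') =
     Game ((\<lambda>x. gsum x (Game L' R')) |`| L |\<union>| (\<lambda>y. gsum (Game L R) y) |`| L')
          ((\<lambda>x. gsum x (Game L' R')) |`| R |\<union>| (\<lambda>y. gsum (Game L R) y) |`| R')"
  by pat_completeness auto
termination
  by (relation "measure (\<lambda>(x, y). size x + size y)")
     (auto simp: less_Suc_eq_le intro: add_increasing add_increasing2 size_le_fsum)

primrec conj :: "game \<Rightarrow> game" where
  "conj (Game L R) = Game (conj |`| R) (conj |`| L)"

text \<open>Misere play: a player who cannot move wins.
  \<open>win True G\<close>: Left, moving first in \<open>G\<close>, wins;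
  \<open>win False G\<close>: Right, moving first in \<open>G\<close>, wins.\<close>
function win :: "bool \<Rightarrow> game \<Rightarrow> bool" where
  "win True (Game L R) = (L = {||} \<or> (\<exists>x\<in>fset L. \<not> win False x))"
| "win False (Game L R) = (R = {||} \<or> (\<exists>y\<in>fset R. \<not> win True y))"
  by pat_completeness auto
termination
  by (relation "measure (\<lambda>(b, x). size x)")
     (auto simp: less_Suc_eq_le intro: add_increasing add_increasing2 size_le_fsum)

datatype outcome = oL | oN | oP | oR

definition outc :: "game \<Rightarrow> outcome" where
  "outc G = (if win True G then (if win False G then oN else oL)
             else (if win False G then oR else oP))"

definition outcome_le :: "outcome \<Rightarrow> outcome \<Rightarrow> bool" where
  "outcome_le a b \<longleftrightarrow> a = b \<or> a = oR \<or> b = oL"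

inductive subpos :: "game \<Rightarrow> game \<Rightarrow> bool" where
  refl: "subpos G G"
| left: "subpos G H \<Longrightarrow> x |\<in>| lopts H \<Longrightarrow> subpos G x"
| right: "subpos G H \<Longrightarrow> x |\<in>| ropts H \<Longrightarrow> subpos G x"

definition universe :: "game set \<Rightarrow> bool" where
  "universe U \<longleftrightarrow>
     (\<forall>G\<in>U. \<forall>x. x |\<in>| lopts G \<or> x |\<in>| ropts G \<longrightarrow> x \<in> U) \<and>
     (\<forall>G\<in>U. \<forall>H\<in>U. gsum G H \<in> U) \<and>
     (\<forall>G\<in>U. conj G \<in> U) \<and>
     (\<forall>A B. A \<noteq> {||} \<and> B \<noteq> {||} \<and> fset A \<subseteq> U \<and> fset B \<subseteq> U \<longrightarrow> Game A B \<in> U)"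

definition left_end :: "game \<Rightarrow> bool" where
  "left_end G \<longleftrightarrow> lopts G = {||}"

definition right_end :: "game \<Rightarrow> bool" where
  "right_end G \<longleftrightarrow> ropts G = {||}"

definition left_dead_end :: "game \<Rightarrow> bool" where
  "left_dead_end G \<longleftrightarrow> (\<forall>H. subpos G H \<longrightarrow> left_end H)"

definition right_dead_end :: "game \<Rightarrow> bool" where
  "right_dead_end G \<longleftrightarrow> (\<forall>H. subpos G H \<longrightarrow> right_end H)"

definition dead_ending :: "game set" where
  "dead_ending = {G. \<forall>H. subpos G H \<and> (left_end H \<or> right_end H)
                        \<longrightarrow> left_dead_end H \<or> right_dead_end H}"

definition ge_U :: "game set \<Rightarrow> game \<Rightarrow> game \<Rightarrow> bool" where
  "ge_U U G H \<longleftrightarrow> (\<forall>X\<in>U. outcome_le (outc (gsum H X)) (outc (gsum G X)))"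

definition ge_all :: "game \<Rightarrow> game \<Rightarrow> bool" where
  "ge_all G H \<longleftrightarrow> (\<forall>V. universe V \<longrightarrow> ge_U V G H)"

inductive_set cl :: "game set \<Rightarrow> game set" for A :: "game set" where
  base: "G \<in> A \<Longrightarrow> G \<in> cl A"
| lopt: "G \<in> cl A \<Longrightarrow> x |\<in>| lopts G \<Longrightarrow> x \<in> cl A"
| ropt: "G \<in> cl A \<Longrightarrow> x |\<in>| ropts G \<Longrightarrow> x \<in> cl A"
| sum: "G \<in> cl A \<Longrightarrow> H \<in> cl A \<Longrightarrow> gsum G H \<in> cl A"

definition up :: "game set \<Rightarrow> game set" where
  "up A = {G. left_dead_end G \<and> (\<exists>H\<in>cl A. ge_all G H)}"

definition left_strong :: "game set \<Rightarrow> game \<Rightarrow> bool" where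
  "left_strong U G \<longleftrightarrow> (\<forall>X\<in>U. left_end X \<longrightarrow> outcome_le oN (outc (gsum G X)))"

text \<open>Adjoint and Left-modified adjoint (intended for Left dead-ends).\<close>
primrec adj :: "game \<Rightarrow> game" where
  "adj (Game L R) = (if Game L R = zero then star else Game (adj |`| R) {|zero|})"

definition lmadj :: "game \<Rightarrow> game" where
  "lmadj G = (if G = zero then Game {|zero|} {|star|} else Game (adj |`| ropts G) {|star|})"

end

theory Submission
  imports Defs
begin

(* In a dead-ending universe every Left end is a Left dead-end, and these Left ends are closed
   under options and sums, so cl(A) = A.  Two facts about adjoints of Left dead-ends then give
   (i) <-> (ii): Left, moving first, loses G\<degree> + G; and whenever Left, moving first, loses
   G\<degree> + H for Left dead-ends G and H, then G \<ge> H, because each Right move from G to g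
   is matched by a Right move from H to some h for which Left again loses g\<degree> + h.
   For (ii) <-> (iii): G\<circledast> has the Left options of G\<degree> but the single Right option *,
   so for Left moving first against a Left end X it behaves like G\<degree>; and an induction on X
   shows that G\<circledast> + X is at least X in outcome, Right's move to * + X being answered by
   Left's move back to X. *)

lemma size_lopt: "x |\<in>| lopts G \<Longrightarrow> size x < size G"
  by (cases G) (auto simp: less_Suc_eq_le intro: add_increasing add_increasing2 size_le_fsum)

lemma size_ropt: "x |\<in>| ropts G \<Longrightarrow> size x < size G"
  by (cases G) (auto simp: less_Suc_eq_le intro: add_increasing add_increasing2 size_le_fsum)

lemma lopts_gsum: "lopts (gsum a b) = (\<lambda>x. gsum x b) |`| lopts a |\<union>| gsum a |`| lopts b"
  by (cases a; cases b) simp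

lemma ropts_gsum: "ropts (gsum a b) = (\<lambda>x. gsum x b) |`| ropts a |\<union>| gsum a |`| ropts b"
  by (cases a; cases b) simp

lemma win_True_iff: "win True G \<longleftrightarrow> lopts G = {||} \<or> (\<exists>x. x |\<in>| lopts G \<and> \<not> win False x)"
  by (cases G) auto

lemma win_False_iff: "win False G \<longleftrightarrow> ropts G = {||} \<or> (\<exists>x. x |\<in>| ropts G \<and> \<not> win True x)"
  by (cases G) auto

lemma win_True_gsum_left_end:
  "lopts X = {||} \<Longrightarrow>
   win True (gsum a X) \<longleftrightarrow> lopts a = {||} \<or> (\<exists>x. x |\<in>| lopts a \<and> \<not> win False (gsum x X))"
  by (subst win_True_iff) (auto simp: lopts_gsum)

lemma zero_gsum [simp]: "gsum zero x = x"
proof (induction x)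
  case (Game L R)
  then have "gsum zero |`| L = L" "gsum zero |`| R = R"
    by (simp_all add: fset.map_ident_strong)
  then show ?case by (simp add: zero_def)
qed

lemma gsum_commute: "gsum a b = gsum b a"
proof (induction a b rule: gsum.induct)
  case (1 L R L' R')
  have "(\<lambda>x. gsum x (Game L' R')) |`| L = gsum (Game L' R') |`| L"
       "gsum (Game L R) |`| L' = (\<lambda>x. gsum x (Game L R)) |`| L'"
       "(\<lambda>x. gsum x (Game L' R')) |`| R = gsum (Game L' R') |`| R"
       "gsum (Game L R) |`| R' = (\<lambda>x. gsum x (Game L R)) |`| R'"
    using 1 by (auto intro: fset.map_cong0)
  then show ?case by (simp add: funion_commute)
qed

lemma outcome_le_outc_iff:
  "outcome_le (outc a) (outc b) \<longleftrightarrow> (win True a \<longrightarrow> win True b) \<and> (win False b \<longrightarrow> win False a)"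
  by (auto simp: outcome_le_def outc_def)

lemma left_strong_iff: "left_strong U G \<longleftrightarrow> (\<forall>X\<in>U. left_end X \<longrightarrow> win True (gsum G X))"
  by (auto simp: left_strong_def outcome_le_def outc_def)

lemma universe_UNIV: "universe UNIV"
  by (simp add: universe_def)

lemma universe_opt: "universe U \<Longrightarrow> G \<in> U \<Longrightarrow> x |\<in>| lopts G \<or> x |\<in>| ropts G \<Longrightarrow> x \<in> U"
  unfolding universe_def by (elim conjE) blast

lemma universe_gsum: "universe U \<Longrightarrow> G \<in> U \<Longrightarrow> H \<in> U \<Longrightarrow> gsum G H \<in> U"
  unfolding universe_def by (elim conjE) blast

lemma left_dead_end_lopts: "left_dead_end G \<Longrightarrow> lopts G = {||}"
  by (auto simp: left_dead_end_def left_end_def intro: subpos.refl)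

lemma subpos_ropt: "subpos g H \<Longrightarrow> g |\<in>| ropts G \<Longrightarrow> subpos G H"
  by (induction rule: subpos.induct) (auto intro: subpos.intros)

lemma left_dead_end_ropt: "left_dead_end G \<Longrightarrow> g |\<in>| ropts G \<Longrightarrow> left_dead_end g"
  by (auto simp: left_dead_end_def intro: subpos_ropt)

lemma left_dead_end_eq_zero: "left_dead_end G \<Longrightarrow> ropts G = {||} \<Longrightarrow> G = zero"
  using left_dead_end_lopts[of G] by (cases G) (auto simp: zero_def)

lemma subpos_zero: "subpos zero H \<Longrightarrow> H = zero"
  by (induction zero H rule: subpos.induct) (auto simp: zero_def)

lemma left_dead_end_zero: "left_dead_end zero"
  unfolding left_dead_end_def left_end_def
  using subpos_zero by (fastforce simp: zero_def)

lemma dead_ending_left_end_imp_left_dead_end: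
  assumes "G \<in> dead_ending" and "left_end G"
  shows "left_dead_end G"
proof -
  have "left_dead_end G \<or> right_dead_end G"
    using assms subpos.refl[of G] by (auto simp: dead_ending_def)
  moreover have "right_dead_end G \<Longrightarrow> G = zero"
    using assms(2) subpos.refl[of G]
    by (cases G) (auto simp: right_dead_end_def right_end_def left_end_def zero_def)
  ultimately show ?thesis
    using left_dead_end_zero by blast
qed

lemma cl_left_ends:
  assumes "universe U" and "U \<subseteq> dead_ending"
  shows "cl {X \<in> U. left_end X} = {X \<in> U. left_end X}"
proof
  show "cl {X \<in> U. left_end X} \<subseteq> {X \<in> U. left_end X}"
  proof
    fix H assume "H \<in> cl {X \<in> U. left_end X}"
    then show "H \<in> {X \<in> U. left_end X}"
    proof (induction rule: cl.induct)
      case (lopt G x)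
      then show ?case by (simp add: left_end_def)
    next
      case (ropt G x)
      then have "left_dead_end G"
        using assms(2) dead_ending_left_end_imp_left_dead_end by blast
      then have "left_dead_end x"
        using ropt.hyps(2) by (rule left_dead_end_ropt)
      moreover have "x \<in> U"
        using ropt universe_opt[OF assms(1)] by blast
      ultimately show ?case by (simp add: left_end_def left_dead_end_lopts)
    next
      case (sum G H)
      then show ?case by (simp add: universe_gsum[OF assms(1)] left_end_def lopts_gsum)
    qed simp
  qed
qed (auto intro: cl.base)

lemma adj_zero: "adj zero = star"
  by (simp add: zero_def)

lemma lopts_adj: "lopts (adj G) = (if G = zero then {|zero|} else adj |`| ropts G)"
  by (cases G) (auto simp: star_def)

lemma ropts_adj: "ropts (adj G) = {|zero|}"
  by (cases G) (auto simp: star_def)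

lemma lopts_lmadj: "lopts (lmadj G) = lopts (adj G)"
  by (cases G) (auto simp: star_def lmadj_def zero_def)

lemma ropts_lmadj: "ropts (lmadj G) = {|star|}"
  by (simp add: lmadj_def)

lemma not_win_True_adj_gsum_self:
  "left_dead_end G \<Longrightarrow> \<not> win True (gsum (adj G) G)"
proof (induction G rule: measure_induct_rule[where f = size])
  case (less G)
  show ?case
  proof (cases "G = zero")
    case True
    then show ?thesis by (simp add: adj_zero star_def zero_def)
  next
    case False
    have "win False (gsum (adj g) G)" if g: "g |\<in>| ropts G" for g
    proof -
      have "\<not> win True (gsum (adj g) g)"
        using less.IH[OF size_ropt[OF g] left_dead_end_ropt[OF less.prems g]] .
      moreover have "gsum (adj g) g |\<in>| ropts (gsum (adj g) G)"
        using g by (simp add: ropts_gsum)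
      ultimately show ?thesis by (subst win_False_iff) blast
    qed
    moreover have "ropts G \<noteq> {||}"
      using False left_dead_end_eq_zero[OF less.prems] by blast
    ultimately show ?thesis
      using False left_dead_end_lopts[OF less.prems]
      by (auto simp: win_True_gsum_left_end lopts_adj)
  qed
qed

lemma not_win_True_star_gsum:
  assumes "left_dead_end H" and "\<not> win True (gsum star H)"
  shows "H = zero"
proof -
  have "win False H"
    using assms by (simp add: win_True_gsum_left_end left_dead_end_lopts star_def)
  moreover have "win True h" if "h |\<in>| ropts H" for h
    using left_dead_end_lopts[OF left_dead_end_ropt[OF assms(1) that]] by (simp add: win_True_iff)
  ultimately have "ropts H = {||}"
    by (auto simp: win_False_iff)
  then show ?thesis
    using assms(1) left_dead_end_eq_zero by blast
qed

lemma not_win_True_adj_gsum_ropt: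
  assumes H: "left_dead_end H" and lose: "\<not> win True (gsum (adj G) H)" and g: "g |\<in>| ropts G"
  shows "\<exists>h. h |\<in>| ropts H \<and> \<not> win True (gsum (adj g) h)"
proof -
  have "G \<noteq> zero"
    using g by (auto simp: zero_def)
  then have "win False (gsum (adj g) H)"
    using lose g left_dead_end_lopts[OF H] by (auto simp: win_True_gsum_left_end lopts_adj)
  moreover have "win True H"
    by (simp add: win_True_iff left_dead_end_lopts[OF H])
  ultimately show ?thesis
    by (auto simp: win_False_iff ropts_gsum ropts_adj)
qed

lemma outcome_le_gsum_of_not_win_True_adj_gsum:
  "left_dead_end G \<Longrightarrow> left_dead_end H \<Longrightarrow> \<not> win True (gsum (adj G) H) \<Longrightarrow>
   outcome_le (outc (gsum H Y)) (outc (gsum G Y))"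
proof (induction "size G + size H + size Y" arbitrary: G H Y rule: less_induct)
  case less
  note IH = less.hyps[unfolded outcome_le_outc_iff]
  have lG: "lopts G = {||}" and lH: "lopts H = {||}"
    using less.prems by (simp_all add: left_dead_end_lopts)
  show ?case
  proof (cases "G = zero")
    case True
    then have "H = G"
      using less.prems not_win_True_star_gsum by (simp add: adj_zero)
    then show ?thesis by (simp add: outcome_le_def)
  next
    case False
    then have rG: "ropts G \<noteq> {||}"
      using left_dead_end_eq_zero[OF less.prems(1)] by blast
    have "win True (gsum G Y)" if Hwin: "win True (gsum H Y)"
    proof (cases "lopts Y = {||}")
      case True
      then show ?thesis by (simp add: win_True_iff lopts_gsum lG)
    next
      case False
      then obtain y where y: "y |\<in>| lopts Y" "\<not> win False (gsum H y)"
        using Hwin by (auto simp: win_True_iff lopts_gsum lH)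
      then have "\<not> win False (gsum G y)"
        using IH[of G H y] less.prems size_lopt[OF y(1)] by auto
      then show ?thesis using y(1) by (auto simp: win_True_iff lopts_gsum)
    qed
    moreover have "win False (gsum H Y)" if Gwin: "win False (gsum G Y)"
    proof -
      obtain x where x: "x |\<in>| ropts (gsum G Y)" "\<not> win True x"
        using Gwin rG by (auto simp: win_False_iff ropts_gsum)
      then consider (G) g where "g |\<in>| ropts G" "x = gsum g Y"
        | (Y) y where "y |\<in>| ropts Y" "x = gsum G y"
        by (auto simp: ropts_gsum)
      then show ?thesis
      proof cases
        case (G g)
        then obtain h where h: "h |\<in>| ropts H" "\<not> win True (gsum (adj g) h)"
          using not_win_True_adj_gsum_ropt less.prems by blast
        have "\<not> win True (gsum h Y)"
          using IH[of g h Y] left_dead_end_ropt[OF less.prems(1) G(1)]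
            left_dead_end_ropt[OF less.prems(2) h(1)] G h x(2)
            size_ropt[OF G(1)] size_ropt[OF h(1)] by auto
        then show ?thesis using h(1) by (auto simp: win_False_iff ropts_gsum)
      next
        case (Y y)
        then have "\<not> win True (gsum H y)"
          using IH[of G H y] less.prems x(2) size_ropt[OF Y(1)] by auto
        then show ?thesis using Y(1) by (auto simp: win_False_iff ropts_gsum)
      qed
    qed
    ultimately show ?thesis by (simp add: outcome_le_outc_iff)
  qed
qed

lemma not_in_up_left_ends_iff_left_strong_adj:
  assumes U: "universe U" "U \<subseteq> dead_ending" and G: "left_dead_end G"
  shows "G \<notin> up {X \<in> U. left_end X} \<longleftrightarrow> left_strong U (adj G)"
proof
  assume not_up: "G \<notin> up {X \<in> U. left_end X}"
  show "left_strong U (adj G)"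
    unfolding left_strong_iff
  proof (intro ballI impI, rule ccontr)
    fix X assume X: "X \<in> U" "left_end X" and lose: "\<not> win True (gsum (adj G) X)"
    then have "left_dead_end X"
      using U(2) dead_ending_left_end_imp_left_dead_end by blast
    then have "ge_all G X"
      using outcome_le_gsum_of_not_win_True_adj_gsum[OF G _ lose]
      by (simp add: ge_all_def ge_U_def)
    then have "G \<in> up {X \<in> U. left_end X}"
      using G X by (auto simp: up_def cl_left_ends[OF U])
    then show False using not_up by blast
  qed
next
  assume strong: "left_strong U (adj G)"
  show "G \<notin> up {X \<in> U. left_end X}"
  proof
    assume "G \<in> up {X \<in> U. left_end X}"
    then obtain H where H: "H \<in> U" "left_end H" "ge_all G H"
      by (auto simp: up_def cl_left_ends[OF U])
    then have "outcome_le (outc (gsum H (adj G))) (outc (gsum G (adj G)))"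
      using universe_UNIV by (simp add: ge_all_def ge_U_def)
    moreover have "win True (gsum H (adj G))"
      using strong H by (simp add: left_strong_iff gsum_commute)
    ultimately show False
      using not_win_True_adj_gsum_self[OF G] by (simp add: outcome_le_outc_iff gsum_commute)
  qed
qed

lemma lmadj_ge_zero_of_left_strong_adj:
  assumes U: "universe U" and strong: "left_strong U (adj G)"
  shows "ge_U U (lmadj G) zero"
proof -
  have "outcome_le (outc Y) (outc (gsum (lmadj G) Y))" if "Y \<in> U" for Y
    using that
  proof (induction Y rule: measure_induct_rule[where f = size])
    case (less Y)
    note IH = less.IH[unfolded outcome_le_outc_iff]
    have opts_U: "y \<in> U" if "y |\<in>| lopts Y \<or> y |\<in>| ropts Y" for y
      using universe_opt[OF U less.prems that] .
    have "win True (gsum (lmadj G) Y)" if Ywin: "win True Y"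
    proof (cases "lopts Y = {||}")
      case True
      then show ?thesis
        using strong less.prems by (simp add: left_strong_iff left_end_def win_True_gsum_left_end lopts_lmadj)
    next
      case False
      then obtain y where y: "y |\<in>| lopts Y" "\<not> win False y"
        using Ywin by (auto simp: win_True_iff)
      then have "\<not> win False (gsum (lmadj G) y)"
        using IH[OF size_lopt[OF y(1)]] opts_U by blast
      then show ?thesis using y(1) by (auto simp: win_True_iff lopts_gsum)
    qed
    moreover have "\<not> win False (gsum (lmadj G) Y)" if "\<not> win False Y"
    proof -
      have "win True y" if "y |\<in>| ropts Y" for y
        using that \<open>\<not> win False Y\<close> by (auto simp: win_False_iff)
      then have "win True (gsum (lmadj G) y)" if "y |\<in>| ropts Y" for y
        using that IH[OF size_ropt] opts_U by blast
      moreover have "win True (gsum star Y)"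
        using \<open>\<not> win False Y\<close> by (auto simp: win_True_iff lopts_gsum star_def)
      ultimately show ?thesis
        by (auto simp: win_False_iff ropts_gsum ropts_lmadj)
    qed
    ultimately show ?case by (auto simp: outcome_le_outc_iff)
  qed
  then show ?thesis by (simp add: ge_U_def)
qed

lemma left_strong_adj_of_lmadj_ge_zero:
  assumes "ge_U U (lmadj G) zero"
  shows "left_strong U (adj G)"
  unfolding left_strong_iff
proof (intro ballI impI)
  fix X assume X: "X \<in> U" "left_end X"
  then have "win True (gsum (lmadj G) X)"
    using assms by (auto simp: ge_U_def outcome_le_outc_iff win_True_iff left_end_def)
  then show "win True (gsum (adj G) X)"
    using X(2) by (simp add: win_True_gsum_left_end left_end_def lopts_lmadj)
qed

theorem mainTheorem3:
  fixes U :: "game set" and G :: game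
  assumes "universe U" and "U \<subseteq> dead_ending" and "left_dead_end G"
  shows "(G \<notin> up {X \<in> U. left_end X} \<longleftrightarrow> left_strong U (adj G)) \<and>
         (left_strong U (adj G) \<longleftrightarrow> ge_U U (lmadj G) zero)"
  using not_in_up_left_ends_iff_left_strong_adj[OF assms]
    lmadj_ge_zero_of_left_strong_adj[OF assms(1)] left_strong_adj_of_lmadj_ge_zero
  by blast

end
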